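(* Let $q$ be a prime power, $m\ge1$, $g_1,\dots,g_n\in\mathbb{F}_{q^m}$ linearly independent over $\mathbb{F}_q$, $\mathbf g=(g_1,\dots,g_n)$, $\mathbf r=(r_1,\dots,r_n)\in\mathbb{F}_{q^m}^n$. Identify $[f(x)\ \ g(x)]\in\mathcal{L}_q(x,q^m)^2$ with $Q(x,y)=f(x)+g(y)$. Then the interpolation module $\mathfrak M(\mathbf r)$ consists exactly of all $Q(x,y)=f(x)+g(y)$ with $f,g\in\mathcal{L}_q(x,q^m)$ such that $Q(g_i,r_i)=0$ for $i=1,\dots,n$.
   Context: Write $[i]:=q^i$. A $q$-linearized polynomial is $f(x)=\sum_{i=0}^{d}a_ix^{[i]}$ with $a_i\in\mathbb{F}_{q^m}$; $\mathcal{L}_q(x,q^m)$ is the ring of these under addition and composition $\circ$. $\Pi_{\mathbf g}(x)=\prod_{u\in\langle g_1,\dots,g_n\rangle}(x-u)$ ($\mathbb{F}_q$-span) is the $q$-annihilator polynomial, an element of $\mathcal{L}_q(x,q^m)$. $\Lambda_{\mathbf g,\mathbf r}(x)=\sum_{i=1}^n(-1)^{n-i}r_i\det(\mathfrak D_i(\mathbf g,x))/\det(M_n(g_1,\dots,g_n))$, where $M_n(v_1,\dots,v_s)$ is the $n\times s$ matrix with $(j,l)$ entry $v_l^{[j-1]}$ and $\mathfrak D_i(\mathbf g,x)$ is $M_n(g_1,\dots,g_n,x)$ with the $i$-th column removed; it lies in $\mathcal{L}_q(x,q^m)$ and $\Lambda_{\mathbf g,\mathbf r}(g_i)=r_i$.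 The interpolation module $\mathfrak M(\mathbf r)$ is the set of all $\beta\circ[\Pi_{\mathbf g}(x)\ \ 0]+\gamma\circ[-\Lambda_{\mathbf g,\mathbf r}(x)\ \ x]$ with $\beta,\gamma\in\mathcal{L}_q(x,q^m)$, where $h\circ[f_1\ f_2]:=[h\circ f_1\ \ h\circ f_2]$. *)

theory Defs
  imports "HOL-Computational_Algebra.Polynomial" "Jordan_Normal_Form.Determinant"
begin

text \<open>The field F_{q^m} is a finite field type 'a with CARD('a) = q^m.
  The subfield F_q is the set of elements fixed by the q-th power map.\<close>

definition Fq :: "nat \<Rightarrow> 'a::field set" where
  "Fq q = {x. x ^ q = x}"

definition Lq :: "nat \<Rightarrow> 'a::field poly set" where
  "Lq q = {f. \<forall>k. coeff f k \<noteq> 0 \<longrightarrow> (\<exists>i. k = q ^ i)}"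

definition Fq_lin_indep :: "nat \<Rightarrow> nat \<Rightarrow> (nat \<Rightarrow> 'a::field) \<Rightarrow> bool" where
  "Fq_lin_indep q n g \<longleftrightarrow>
     (\<forall>c. (\<forall>i<n. c i \<in> Fq q) \<longrightarrow> (\<Sum>i<n. c i * g i) = 0 \<longrightarrow> (\<forall>i<n. c i = 0))"

definition Fq_span :: "nat \<Rightarrow> nat \<Rightarrow> (nat \<Rightarrow> 'a::field) \<Rightarrow> 'a set" where
  "Fq_span q n g = {\<Sum>i<n. c i * g i | c. \<forall>i<n. c i \<in> Fq q}"

definition annih :: "nat \<Rightarrow> nat \<Rightarrow> (nat \<Rightarrow> 'a::field) \<Rightarrow> 'a poly" where
  "annih q n g = (\<Prod>u\<in>Fq_span q n g. [:- u, 1:])"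

text \<open>The n x (n+1) Moore-type matrix M_n(g_1,...,g_n,x) with polynomial entries
  (row j, column l, 0-indexed): g_l^{[j]} for l < n, and x^{[j]} in the last column.\<close>

definition moore_x :: "nat \<Rightarrow> nat \<Rightarrow> (nat \<Rightarrow> 'a::field) \<Rightarrow> 'a poly mat" where
  "moore_x q n g = mat n (n + 1)
     (\<lambda>(j, l). if l < n then [: g l ^ (q ^ j) :] else monom 1 (q ^ j))"

definition moore :: "nat \<Rightarrow> nat \<Rightarrow> (nat \<Rightarrow> 'a::field) \<Rightarrow> 'a mat" where
  "moore q n g = mat n n (\<lambda>(j, l). g l ^ (q ^ j))"

text \<open>D_i: M_n(g,x) with column i (0-indexed) removed.\<close>

definition Dmat :: "nat \<Rightarrow> nat \<Rightarrow> (nat \<Rightarrow> 'a::field) \<Rightarrow> nat \<Rightarrow> 'a poly mat" where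
  "Dmat q n g i = mat n n (\<lambda>(j, l). moore_x q n g $$ (j, if l < i then l else l + 1))"

text \<open>Lambda_{g,r}(x) = sum_{i=1}^n (-1)^{n-i} r_i det(D_i(g,x)) / det(M_n(g));
  with 0-indexed i the sign is (-1)^(n-1-i).\<close>

definition Lam :: "nat \<Rightarrow> nat \<Rightarrow> (nat \<Rightarrow> 'a::field) \<Rightarrow> (nat \<Rightarrow> 'a) \<Rightarrow> 'a poly" where
  "Lam q n g r = smult (inverse (det (moore q n g)))
     (\<Sum>i<n. smult ((-1) ^ (n - 1 - i) * r i) (det (Dmat q n g i)))"

text \<open>Interpolation module: all beta o [Pi 0] + gamma o [-Lambda x], beta, gamma in L_q.\<close>

definition interp_module :: "nat \<Rightarrow> nat \<Rightarrow> (nat \<Rightarrow> 'a::field) \<Rightarrow> (nat \<Rightarrow> 'a) \<Rightarrow> ('a poly \<times> 'a poly) set" where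
  "interp_module q n g r =
     {(pcompose \<beta> (annih q n g) + pcompose \<gamma> (- Lam q n g r),
       pcompose \<beta> 0 + pcompose \<gamma> [:0, 1:]) | \<beta> \<gamma>. \<beta> \<in> Lq q \<and> \<gamma> \<in> Lq q}"

end

theory Submission
  imports Defs "HOL-Number_Theory.Residues"
begin

text \<open>
  A \<open>q\<close>-linearized polynomial is \<open>\<bbbF>\<^sub>q\<close>-linear as a function, so \<open>f(x) + h(y)\<close> vanishes at all
  \<open>(g\<^sub>i, r\<^sub>i)\<close> iff \<open>f + h \<circ> \<Lambda>\<close> vanishes on the \<open>g\<^sub>i\<close> (as \<open>\<Lambda>(g\<^sub>i) = r\<^sub>i\<close>), i.e. on their span \<open>V\<close>.
  Every member of the module has this property because \<open>\<Pi>\<close> vanishes on \<open>V\<close>. Conversely, a nonzero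
  linearized polynomial of degree below \<open>q ^ n = |V|\<close> cannot vanish on \<open>V\<close>; so one vanishing on \<open>V\<close> has
  degree \<open>q ^ t\<close> with \<open>t \<ge> n\<close>, and subtracting a multiple of \<open>\<Pi> ^ q ^ (t - n)\<close> lowers the degree until
  it is written as \<open>\<beta> \<circ> \<Pi>\<close>. The same degree bound shows that the Moore matrix is invertible, which makes
  \<open>\<Lambda>\<close> well defined and \<open>\<Pi>\<close> itself linearized.
\<close>

hide_const (open) UnivPoly.monom UnivPoly.coeff

lemma frobenius_add:
  fixes x y :: "'b::comm_semiring_1"
  assumes "prime CHAR('b)" "q = CHAR('b) ^ e"
  shows "(x + y) ^ (q ^ i) = x ^ (q ^ i) + y ^ (q ^ i)"
  by (rule freshmans_dream'[OF assms(1), of _ "e * i"]) (simp add: assms(2) power_mult)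

lemma frobenius_sum:
  fixes f :: "'c \<Rightarrow> 'b::comm_semiring_1"
  assumes "prime CHAR('b)" "q = CHAR('b) ^ e"
  shows "(sum f A) ^ (q ^ i) = (\<Sum>a\<in>A. f a ^ (q ^ i))"
  by (rule freshmans_dream_sum'[OF assms(1), of _ "e * i"]) (simp add: assms(2) power_mult)

lemma frobenius_uminus:
  fixes x :: "'b::comm_ring_1"
  assumes "prime CHAR('b)" "q = CHAR('b) ^ e"
  shows "(- x) ^ (q ^ i) = - (x ^ (q ^ i))"
proof -
  have "q ^ i > 0"
    using assms prime_gt_0_nat by simp
  have "(- x) ^ (q ^ i) + x ^ (q ^ i) = (- x + x) ^ (q ^ i)"
    by (rule frobenius_add[OF assms, symmetric])
  also have "\<dots> = 0"
    using \<open>q ^ i > 0\<close> by (simp add: zero_power)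
  finally show ?thesis
    by (simp add: eq_neg_iff_add_eq_0)
qed

lemma power_card_UNIV_eq_self:
  fixes x :: "'a::{finite, field}"
  shows "x ^ card (UNIV :: 'a set) = x"
proof (cases "x = 0")
  case True
  then show ?thesis
    by (simp add: finite_UNIV_card_ge_0)
next
  case False
  define G :: "'a monoid" where "G = \<lparr>carrier = UNIV - {0 :: 'a}, monoid.mult = (*), one = 1\<rparr>"
  interpret G: group G
    by (rule groupI) (auto simp: G_def intro!: bexI[of _ "inverse x" for x])
  have G_pow: "y [^]\<^bsub>G\<^esub> (k :: nat) = y ^ k" for y k
    by (induction k) (simp_all add: G_def)
  have "x \<in> carrier G" and "\<one>\<^bsub>G\<^esub> = 1"
    using False by (simp_all add: G_def)
  then have "x ^ order G = 1"
    using G.pow_order_eq_1 by (simp only: G_pow)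
  moreover have "order G = card (UNIV :: 'a set) - 1"
    by (simp add: order_def G_def card_Diff_singleton)
  ultimately have "x ^ (card (UNIV :: 'a set) - 1) = 1"
    by simp
  moreover have "x ^ (card (UNIV :: 'a set) - 1) * x = x ^ card (UNIV :: 'a set)"
    by (rule power_minus_mult) (simp add: finite_UNIV_card_ge_0)
  ultimately show ?thesis
    by simp
qed

definition linearized :: "nat \<Rightarrow> (nat \<Rightarrow> 'a::field) \<Rightarrow> nat \<Rightarrow> 'a poly" where
  "linearized q a N = (\<Sum>i<N. monom (a i) (q ^ i))"

lemma Lq_zero [simp]: "0 \<in> Lq q"
  by (simp add: Lq_def)

lemma Lq_add: "f \<in> Lq q \<Longrightarrow> h \<in> Lq q \<Longrightarrow> f + h \<in> Lq q"
  by (auto simp: Lq_def) (metis add.right_neutral)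

lemma Lq_uminus: "f \<in> Lq q \<Longrightarrow> - f \<in> Lq q"
  by (auto simp: Lq_def)

lemma Lq_diff: "f \<in> Lq q \<Longrightarrow> h \<in> Lq q \<Longrightarrow> f - h \<in> Lq q"
  using Lq_add[of f q "- h"] Lq_uminus by fastforce

lemma Lq_smult: "f \<in> Lq q \<Longrightarrow> smult c f \<in> Lq q"
  by (auto simp: Lq_def)

lemma Lq_sum: "(\<And>i. i \<in> A \<Longrightarrow> f i \<in> Lq q) \<Longrightarrow> sum f A \<in> Lq q"
  by (induction A rule: infinite_finite_induct) (auto intro: Lq_add)

lemma Lq_monom: "monom c (q ^ i) \<in> Lq q"
  by (auto simp: Lq_def coeff_monom split: if_splits)

lemma Lq_linearized: "linearized q a N \<in> Lq q"
  unfolding linearized_def by (intro Lq_sum Lq_monom)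

lemma coeff_0_Lq: "q \<ge> 1 \<Longrightarrow> f \<in> Lq q \<Longrightarrow> coeff f 0 = 0"
  by (auto simp: Lq_def)

lemma poly_0_Lq: "q \<ge> 1 \<Longrightarrow> f \<in> Lq q \<Longrightarrow> poly f 0 = 0"
  by (simp add: poly_0_coeff_0 coeff_0_Lq)

lemma degree_Lq_eq_power: "f \<in> Lq q \<Longrightarrow> f \<noteq> 0 \<Longrightarrow> \<exists>t. degree f = q ^ t"
  by (auto simp: Lq_def)

lemma coeff_linearized:
  "(q::nat) \<ge> 2 \<Longrightarrow> coeff (linearized q a N) (q ^ j) = (if j < N then a j else 0)"
  by (simp add: linearized_def coeff_sum coeff_monom power_inject_exp)

lemma poly_linearized: "poly (linearized q a N) x = (\<Sum>i<N. a i * x ^ (q ^ i))"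
  by (simp add: linearized_def poly_sum poly_monom)

lemma pcompose_monom: "pcompose (monom c k) P = smult c (P ^ k)"
  by (simp add: pcompose_altdef map_poly_monom poly_monom)

lemma pcompose_linearized:
  "pcompose (linearized q a N) P = (\<Sum>i<N. smult (a i) (P ^ (q ^ i)))"
  by (simp add: linearized_def pcompose_sum pcompose_monom)

lemma degree_linearized_le: "q \<ge> 1 \<Longrightarrow> degree (linearized q a N) \<le> q ^ (N - 1)"
  unfolding linearized_def
proof (rule degree_sum_le)
  fix i assume "q \<ge> 1" "i \<in> {..<N}"
  then have "q ^ i \<le> q ^ (N - 1)"
    by (intro power_increasing) auto
  then show "degree (monom (a i) (q ^ i)) \<le> q ^ (N - 1)"
    using degree_monom_le order_trans by blast
qed simp

lemma Lq_eq_linearized: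
  assumes q: "q \<ge> 2" and f: "f \<in> Lq q"
  shows "f = linearized q (\<lambda>i. coeff f (q ^ i)) (Suc (degree f))"
proof (rule poly_eqI)
  fix k
  show "coeff f k = coeff (linearized q (\<lambda>i. coeff f (q ^ i)) (Suc (degree f))) k"
  proof (cases "\<exists>j. k = q ^ j")
    case True
    then obtain j where k: "k = q ^ j" by blast
    have "j < 2 ^ j" by (rule less_exp)
    also have "\<dots> \<le> q ^ j" using q by (simp add: power_mono)
    finally have "j \<le> degree f \<or> degree f < q ^ j" by linarith
    then show ?thesis
      using coeff_linearized[OF q, of "\<lambda>i. coeff f (q ^ i)" "Suc (degree f)" j] k
        coeff_eq_0[of f "q ^ j"] by auto
  next
    case False
    then have "coeff f k = 0"
      and "coeff (linearized q (\<lambda>i. coeff f (q ^ i)) (Suc (degree f))) k = 0"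
      using f Lq_linearized[of q "\<lambda>i. coeff f (q ^ i)" "Suc (degree f)"] by (auto simp: Lq_def)
    then show ?thesis by simp
  qed
qed

locale char_power =
  fixes q e :: nat and field_type :: "'a::field itself"
  assumes prime_CHAR: "prime CHAR('a)" and q_eq: "q = CHAR('a) ^ e" and q_ge_2: "q \<ge> 2"
begin

lemma q_ge_1: "q \<ge> 1"
  using q_ge_2 by simp

lemma prime_CHAR_poly: "prime CHAR('a poly)"
  using prime_CHAR by simp

lemma q_eq_CHAR_poly: "q = CHAR('a poly) ^ e"
  using q_eq by simp

lemma Lq_power:
  assumes f: "(f :: 'a poly) \<in> Lq q"
  shows "f ^ (q ^ j) \<in> Lq q"
proof -
  let ?a = "\<lambda>i. coeff f (q ^ i)" and ?N = "Suc (degree f)"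
  have "f ^ (q ^ j) = (\<Sum>i<?N. monom (?a i) (q ^ i) ^ (q ^ j))"
    by (subst Lq_eq_linearized[OF q_ge_2 f], unfold linearized_def)
       (rule frobenius_sum[OF prime_CHAR_poly q_eq_CHAR_poly])
  also have "\<dots> = (\<Sum>i<?N. monom (?a i ^ (q ^ j)) (q ^ (i + j)))"
    by (simp add: monom_power power_add)
  also have "\<dots> \<in> Lq q"
    by (intro Lq_sum Lq_monom)
  finally show ?thesis .
qed

lemma Lq_pcompose:
  assumes "(f :: 'a poly) \<in> Lq q" and "P \<in> Lq q"
  shows "pcompose f P \<in> Lq q"
  by (subst Lq_eq_linearized[OF q_ge_2 assms(1)], unfold pcompose_linearized)
     (intro Lq_sum Lq_smult Lq_power assms(2))

lemma pcompose_uminus_Lq: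
  assumes "(f :: 'a poly) \<in> Lq q"
  shows "pcompose f (- P) = - pcompose f P"
  by (subst (1 2) Lq_eq_linearized[OF q_ge_2 assms], unfold pcompose_linearized)
     (simp add: frobenius_uminus[OF prime_CHAR_poly q_eq_CHAR_poly] sum_negf)

lemma poly_add_Lq:
  assumes "(f :: 'a poly) \<in> Lq q"
  shows "poly f (x + y) = poly f x + poly f y"
  by (subst (1 2 3) Lq_eq_linearized[OF q_ge_2 assms], unfold poly_linearized)
     (simp add: frobenius_add[OF prime_CHAR q_eq] distrib_left sum.distrib)

lemma poly_sum_Lq:
  assumes "(f :: 'a poly) \<in> Lq q"
  shows "poly f (sum h A) = (\<Sum>a\<in>A. poly f (h a))"
  by (induction A rule: infinite_finite_induct)
     (simp_all add: poly_0_Lq[OF q_ge_1 assms] poly_add_Lq[OF assms])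

lemma poly_uminus_Lq:
  assumes "(f :: 'a poly) \<in> Lq q"
  shows "poly f (- x) = - poly f x"
  using poly_add_Lq[OF assms, of "- x" x] poly_0_Lq[OF q_ge_1 assms]
  by (simp add: eq_neg_iff_add_eq_0)

lemma power_q_power_Fq: "(c :: 'a) \<in> Fq q \<Longrightarrow> c ^ (q ^ i) = c"
  by (induction i) (simp_all add: Fq_def power_mult)

lemma poly_mult_Fq_Lq:
  assumes "(f :: 'a poly) \<in> Lq q" and "c \<in> Fq q"
  shows "poly f (c * x) = c * poly f x"
  by (subst (1 2) Lq_eq_linearized[OF q_ge_2 assms(1)], unfold poly_linearized)
     (simp add: power_mult_distrib power_q_power_Fq[OF assms(2)] sum_distrib_left mult_ac
       del: sum.lessThan_Suc)

lemma Fq_diff: "(a :: 'a) \<in> Fq q \<Longrightarrow> b \<in> Fq q \<Longrightarrow> a - b \<in> Fq q"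
  using frobenius_add[OF prime_CHAR q_eq, of a "- b" 1] frobenius_uminus[OF prime_CHAR q_eq, of b 1]
  by (simp add: Fq_def)

end

locale Fqm_field = char_power q e field_type for q e and field_type :: "'a::{finite, field} itself" +
  fixes m :: nat
  assumes card_UNIV: "card (UNIV :: 'a set) = q ^ m" and m_ge_1: "m \<ge> 1"
begin

lemma power_q_power_m: "(x :: 'a) ^ (q ^ m) = x"
  using power_card_UNIV_eq_self[of x] card_UNIV by simp

lemma card_Fq_le: "card (Fq q :: 'a set) \<le> q"
proof -
  let ?P = "monom (1 :: 'a) q - [:0, 1:]"
  have "coeff [:0, 1 :: 'a:] q = 0"
    using q_ge_2 by (simp add: coeff_pCons split: nat.split)
  then have "coeff ?P q = 1"
    by (simp only: coeff_diff coeff_monom) simp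
  then have "?P \<noteq> 0"
    by (metis coeff_0 one_neq_zero)
  have "Fq q = {x. poly ?P x = 0}"
    by (auto simp: Fq_def poly_monom)
  then have "card (Fq q :: 'a set) \<le> degree ?P"
    using card_poly_roots_bound[OF \<open>?P \<noteq> 0\<close>] by simp
  also have "degree ?P \<le> q"
    using q_ge_2 by (intro degree_diff_le) (auto intro: order_trans[OF degree_monom_le])
  finally show ?thesis .
qed

lemma trace_in_Fq: "(\<Sum>i<m. (x :: 'a) ^ (q ^ i)) \<in> Fq q"
proof -
  obtain k where m: "m = Suc k"
    using m_ge_1 by (cases m) auto
  have "(\<Sum>i<m. x ^ (q ^ i)) ^ (q ^ 1) = (\<Sum>i<m. (x ^ (q ^ i)) ^ (q ^ 1))"
    by (rule frobenius_sum[OF prime_CHAR q_eq])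
  then have "(\<Sum>i<m. x ^ (q ^ i)) ^ q = (\<Sum>i<m. x ^ (q ^ Suc i))"
    by (simp add: power_mult[symmetric] mult.commute)
  also have "\<dots> = (\<Sum>i<k. x ^ (q ^ Suc i)) + x ^ (q ^ m)"
    by (simp only: m sum.lessThan_Suc)
  also have "\<dots> = x ^ (q ^ 0) + (\<Sum>i<k. x ^ (q ^ Suc i))"
    by (simp only: power_q_power_m power_0 power_one_right add.commute)
  also have "\<dots> = (\<Sum>i<m. x ^ (q ^ i))"
    by (simp only: m sum.lessThan_Suc_shift)
  finally show ?thesis
    by (simp add: Fq_def)
qed

text \<open>The trace map \<open>x \<mapsto> \<Sum>i<m. x ^ (q ^ i)\<close> sends all \<open>q ^ m\<close> elements into \<open>Fq q\<close>, and each of its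
  fibres has at most \<open>q ^ (m - 1)\<close> elements, its degree.\<close>

lemma card_Fq_ge: "q \<le> card (Fq q :: 'a set)"
proof -
  define T :: "'a poly" where "T = linearized q (\<lambda>_. 1) m"
  have fibre: "card (poly T -` {y}) \<le> q ^ (m - 1)" for y
  proof -
    have "coeff [:y:] (q ^ (m - 1)) = 0"
      using q_ge_1 by (cases "q ^ (m - 1)") simp_all
    then have "coeff (T - [:y:]) (q ^ (m - 1)) = 1"
      using coeff_linearized[OF q_ge_2, of "\<lambda>_. 1" m "m - 1"] m_ge_1 by (simp add: T_def)
    then have "T - [:y:] \<noteq> 0"
      by (metis coeff_0 one_neq_zero)
    have "poly T -` {y} = {x. poly (T - [:y:]) x = 0}"
      by auto
    then have "card (poly T -` {y}) \<le> degree (T - [:y:])"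
      using card_poly_roots_bound[OF \<open>T - [:y:] \<noteq> 0\<close>] by simp
    also have "\<dots> \<le> q ^ (m - 1)"
      using degree_linearized_le[OF q_ge_1, of "\<lambda>_. 1" m] by (intro degree_diff_le) (auto simp: T_def)
    finally show ?thesis .
  qed
  have "q * q ^ (m - 1) = card (UNIV :: 'a set)"
    using card_UNIV m_ge_1 by (simp flip: power_Suc)
  also have "(UNIV :: 'a set) = (\<Union>y\<in>range (poly T). poly T -` {y})"
    by auto
  also have "card \<dots> \<le> (\<Sum>y\<in>range (poly T). card (poly T -` {y}))"
    by (rule card_UN_le) simp
  also have "\<dots> \<le> card (range (poly T)) * q ^ (m - 1)"
    using sum_mono[OF fibre] by simp
  also have "\<dots> \<le> card (Fq q :: 'a set) * q ^ (m - 1)"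
    using trace_in_Fq by (intro mult_right_mono card_mono) (auto simp: T_def poly_linearized)
  finally show ?thesis
    using q_ge_1 by simp
qed

lemma card_Fq: "card (Fq q :: 'a set) = q"
  using card_Fq_le card_Fq_ge by simp

end

lemma poly_det: "poly (det A) x = det (map_mat (\<lambda>p. poly p x) A)"
proof -
  interpret comm_ring_hom "\<lambda>p. poly p x"
    by unfold_locales simp_all
  show ?thesis
    by simp
qed

lemma degree_det_const_entries:
  fixes A :: "'b::comm_ring_1 poly mat"
  assumes A: "A \<in> carrier_mat n n" and const: "\<And>i j. i < n \<Longrightarrow> j < n \<Longrightarrow> degree (A $$ (i, j)) = 0"
  shows "degree (det A) = 0"
proof -
  interpret comm_ring_hom "\<lambda>c :: 'b. [:c:]"
    by unfold_locales (simp_all add: one_pCons)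
  have "A = map_mat (\<lambda>c. [:c:]) (map_mat (\<lambda>p. coeff p 0) A)"
    using A const by (intro eq_matI) (auto simp: degree_0_id)
  then have "det A = [:det (map_mat (\<lambda>p. coeff p 0) A):]"
    by (metis hom_det)
  then show ?thesis
    by simp
qed

definition moved_col :: "nat \<Rightarrow> nat \<Rightarrow> nat \<Rightarrow> nat" where
  "moved_col i t l = (if l < i then l else if l < t then l + 1 else if l = t then i else l)"

lemma det_move_col:
  fixes A :: "'b::comm_ring_1 mat"
  assumes A: "A \<in> carrier_mat n n" and "i \<le> t" "t < n"
  shows "det (mat n n (\<lambda>(j, l). A $$ (j, moved_col i t l))) = (-1) ^ (t - i) * det A"
  using assms(2,3)
proof (induction t)
  case 0
  then have "mat n n (\<lambda>(j, l). A $$ (j, moved_col i 0 l)) = A"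
    using A by (intro eq_matI) (auto simp: moved_col_def)
  then show ?case
    using 0 by simp
next
  case (Suc t)
  show ?case
  proof (cases "i = Suc t")
    case True
    then have "mat n n (\<lambda>(j, l). A $$ (j, moved_col i (Suc t) l)) = A"
      using A by (intro eq_matI) (auto simp: moved_col_def)
    then show ?thesis
      using True by simp
  next
    case False
    then have "i \<le> t"
      using Suc.prems by simp
    have "mat n n (\<lambda>(j, l). A $$ (j, moved_col i (Suc t) l))
        = swapcols t (Suc t) (mat n n (\<lambda>(j, l). A $$ (j, moved_col i t l)))"
      using Suc.prems \<open>i \<le> t\<close> by (intro eq_matI) (auto simp: moved_col_def)
    then show ?thesis
      using Suc \<open>i \<le> t\<close> det_swapcols[of t n "Suc t" "mat n n (\<lambda>(j, l). A $$ (j, moved_col i t l))"]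
      by (simp add: Suc_diff_le)
  qed
qed

lemma Dmat_carrier: "Dmat q n g k \<in> carrier_mat n n"
  by (simp add: Dmat_def)

lemma dim_Dmat [simp]: "dim_row (Dmat q n g k) = n" "dim_col (Dmat q n g k) = n"
  by (simp_all add: Dmat_def)

lemma Dmat_entry:
  assumes "j < n" "l < n" "k < n"
  shows "Dmat q n g k $$ (j, l) =
    (if l < n - 1 then [: g (if l < k then l else l + 1) ^ (q ^ j) :] else monom 1 (q ^ j))"
  using assms by (auto simp: Dmat_def moore_x_def)

text \<open>Expanding along the last column, which holds the powers \<open>x ^ (q ^ j)\<close>, writes the determinant
  as a combination of these monomials with constant cofactors.\<close>

lemma det_Dmat_in_Lq:
  assumes k: "k < n"
  shows "det (Dmat q n g k) \<in> Lq q"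
proof -
  let ?D = "Dmat q n g k"
  have "det ?D = (\<Sum>j<n. ?D $$ (j, n - 1) * cofactor ?D j (n - 1))"
    using k by (intro laplace_expansion_column Dmat_carrier) simp
  also have "\<dots> \<in> Lq q"
  proof (rule Lq_sum)
    fix j assume j: "j \<in> {..<n}"
    have "degree (det (mat_delete ?D j (n - 1))) = 0"
      using Dmat_carrier[of q n g k] by (intro degree_det_const_entries mat_delete_carrier)
        (auto simp: mat_delete_def Dmat_entry k)
    then have "degree (cofactor ?D j (n - 1)) = 0"
      by (cases "even (j + (n - 1))") (simp_all add: cofactor_def)
    then have "?D $$ (j, n - 1) * cofactor ?D j (n - 1)
        = smult (coeff (cofactor ?D j (n - 1)) 0) (monom 1 (q ^ j))"
      using j k by (subst (2) degree_0_id[symmetric]) (auto simp: Dmat_entry)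
    then show "?D $$ (j, n - 1) * cofactor ?D j (n - 1) \<in> Lq q"
      by (simp add: Lq_smult Lq_monom)
  qed
  finally show ?thesis .
qed

locale Fq_independent = Fqm_field q e field_type m
  for q e and field_type :: "'a::{finite, field} itself" and m +
  fixes n :: nat and g :: "nat \<Rightarrow> 'a"
  assumes indep: "Fq_lin_indep q n g"
begin

lemma Fq_span_eq_image:
  "Fq_span q n g = (\<lambda>c. \<Sum>i<n. c i * g i) ` (PiE {..<n} (\<lambda>_. Fq q))"
proof
  show "Fq_span q n g \<subseteq> (\<lambda>c. \<Sum>i<n. c i * g i) ` (PiE {..<n} (\<lambda>_. Fq q))"
  proof
    fix u assume "u \<in> Fq_span q n g"
    then obtain c where "\<forall>i<n. c i \<in> Fq q" and "u = (\<Sum>i<n. c i * g i)"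
      by (auto simp: Fq_span_def)
    then have "u = (\<Sum>i<n. restrict c {..<n} i * g i)" and "restrict c {..<n} \<in> PiE {..<n} (\<lambda>_. Fq q)"
      by auto
    then show "u \<in> (\<lambda>c. \<Sum>i<n. c i * g i) ` (PiE {..<n} (\<lambda>_. Fq q))"
      by blast
  qed
qed (auto simp: Fq_span_def)

lemma inj_on_Fq_coordinates: "inj_on (\<lambda>c. \<Sum>i<n. c i * g i) (PiE {..<n} (\<lambda>_. Fq q))"
proof (rule inj_onI)
  fix c d
  assume c: "c \<in> PiE {..<n} (\<lambda>_. Fq q)" and d: "d \<in> PiE {..<n} (\<lambda>_. Fq q)"
    and "(\<Sum>i<n. c i * g i) = (\<Sum>i<n. d i * g i)"
  then have "(\<Sum>i<n. (c i - d i) * g i) = 0"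
    by (simp add: left_diff_distrib sum_subtractf)
  moreover have "\<forall>i<n. c i - d i \<in> Fq q"
    using c d by (intro allI impI Fq_diff) auto
  ultimately have "\<forall>i<n. c i - d i = 0"
    using indep[unfolded Fq_lin_indep_def, rule_format, of "\<lambda>i. c i - d i"] by blast
  then show "c = d"
    using c d by (intro PiE_ext) auto
qed

lemma card_Fq_span: "card (Fq_span q n g) = q ^ n"
  by (simp add: Fq_span_eq_image card_image[OF inj_on_Fq_coordinates] card_PiE card_Fq)

lemma g_in_Fq_span:
  assumes "i < n"
  shows "g i \<in> Fq_span q n g"
proof -
  have "(\<Sum>j<n. (if j = i then 1 else 0) * g j) = (\<Sum>j<n. if j = i then g j else 0)"
    by (rule sum.cong) auto
  also have "\<dots> = g i"
    using assms by simp
  finally show ?thesis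
    unfolding Fq_span_def using q_ge_1
    by (intro CollectI exI[of _ "\<lambda>j. if j = i then 1 else 0"]) (auto simp: Fq_def)
qed

lemma poly_Fq_span_Lq_eq_0:
  assumes f: "f \<in> Lq q" and "\<forall>i<n. poly f (g i) = 0" and "u \<in> Fq_span q n g"
  shows "poly f u = 0"
proof -
  obtain c where c: "\<forall>i<n. c i \<in> Fq q" and u: "u = (\<Sum>i<n. c i * g i)"
    using assms(3) by (auto simp: Fq_span_def)
  have "poly f u = (\<Sum>i<n. c i * poly f (g i))"
    using c by (simp add: u poly_sum_Lq[OF f] poly_mult_Fq_Lq[OF f])
  then show ?thesis
    using assms(2) by simp
qed

lemma Lq_eq_0_if_degree_less:
  assumes f: "f \<in> Lq q" and vanish: "\<forall>i<n. poly f (g i) = 0" and deg: "degree f < q ^ n"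
  shows "f = 0"
proof (rule ccontr)
  assume "f \<noteq> 0"
  have "Fq_span q n g \<subseteq> {x. poly f x = 0}"
    using poly_Fq_span_Lq_eq_0[OF f vanish] by blast
  then have "q ^ n \<le> card {x. poly f x = 0}"
    unfolding card_Fq_span[symmetric] by (rule card_mono[OF poly_roots_finite[OF \<open>f \<noteq> 0\<close>]])
  also have "\<dots> \<le> degree f"
    by (rule card_poly_roots_bound[OF \<open>f \<noteq> 0\<close>])
  finally show False
    using deg by simp
qed

text \<open>The rows of the Moore matrix are independent: a nonzero combination would be a nonzero
  linearized polynomial of degree below \<open>q ^ n\<close> vanishing on the \<open>g i\<close>.\<close>

lemma moore_combination_eq_0:
  assumes "\<forall>l<n. (\<Sum>j<n. c j * g l ^ (q ^ j)) = 0"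
  shows "\<forall>j<n. c j = 0"
proof (cases "n = 0")
  case False
  have "degree (linearized q c n) \<le> q ^ (n - 1)"
    by (rule degree_linearized_le[OF q_ge_1])
  also have "\<dots> < q ^ n"
    using False q_ge_2 by (intro power_strict_increasing) auto
  finally have "linearized q c n = 0"
    using assms by (intro Lq_eq_0_if_degree_less Lq_linearized) (auto simp: poly_linearized)
  show ?thesis
  proof (intro allI impI)
    fix j assume "j < n"
    then have "c j = coeff (linearized q c n) (q ^ j)"
      by (simp add: coeff_linearized[OF q_ge_2])
    then show "c j = 0"
      by (simp add: \<open>linearized q c n = 0\<close>)
  qed
qed simp

lemma moore_combination_solvable: "\<exists>c. \<forall>l<n. (\<Sum>j<n. c j * g l ^ (q ^ j)) = b l"
proof -
  define D where "D = PiE {..<n} (\<lambda>_. UNIV :: 'a set)"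
  define F where "F c = restrict (\<lambda>l. \<Sum>j<n. c j * g l ^ (q ^ j)) {..<n}" for c
  have "inj_on F D"
  proof (rule inj_onI)
    fix c d assume "c \<in> D" "d \<in> D" "F c = F d"
    have "\<forall>l<n. (\<Sum>j<n. (c j - d j) * g l ^ (q ^ j)) = 0"
    proof (intro allI impI)
      fix l assume "l < n"
      then show "(\<Sum>j<n. (c j - d j) * g l ^ (q ^ j)) = 0"
        using fun_cong[OF \<open>F c = F d\<close>, of l] by (simp add: F_def left_diff_distrib sum_subtractf)
    qed
    then have "\<forall>j<n. c j - d j = 0"
      by (rule moore_combination_eq_0)
    then show "c = d"
      using \<open>c \<in> D\<close> \<open>d \<in> D\<close> by (intro PiE_ext) (auto simp: D_def)
  qed
  moreover have "F ` D \<subseteq> D"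
    by (simp add: D_def F_def image_subset_iff restrict_PiE_iff)
  ultimately have "F ` D = D"
    by (intro endo_inj_surj) (simp_all add: D_def finite_PiE)
  moreover have "restrict b {..<n} \<in> D"
    by (simp add: D_def)
  ultimately have "restrict b {..<n} \<in> F ` D"
    by simp
  then obtain c where c: "restrict b {..<n} = F c"
    by (rule imageE)
  have "(\<Sum>j<n. c j * g l ^ (q ^ j)) = b l" if "l < n" for l
    using fun_cong[OF c, of l] that by (simp add: F_def)
  then show ?thesis
    by blast
qed

lemma det_moore_nonzero: "det (moore q n g) \<noteq> 0"
proof
  assume "det (moore q n g) = 0"
  have M: "moore q n g \<in> carrier_mat n n"
    by (simp add: moore_def)
  then have "det (transpose_mat (moore q n g)) = 0"
    using \<open>det (moore q n g) = 0\<close> by (simp add: det_transpose)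
  then obtain v where v: "v \<in> carrier_vec n" "v \<noteq> 0\<^sub>v n" "transpose_mat (moore q n g) *\<^sub>v v = 0\<^sub>v n"
    using det_0_iff_vec_prod_zero_field[of "transpose_mat (moore q n g)" n] M by auto
  have "\<forall>l<n. (\<Sum>j<n. v $ j * g l ^ (q ^ j)) = 0"
  proof (intro allI impI)
    fix l assume "l < n"
    then have "(\<Sum>j<n. v $ j * g l ^ (q ^ j)) = (transpose_mat (moore q n g) *\<^sub>v v) $ l"
      using v(1) by (auto simp: mult_mat_vec_def scalar_prod_def moore_def mult.commute
          lessThan_atLeast0 intro!: sum.cong)
    also have "\<dots> = 0"
      using v(3) \<open>l < n\<close> by simp
    finally show "(\<Sum>j<n. v $ j * g l ^ (q ^ j)) = 0" .
  qed
  then have "\<forall>j<n. v $ j = 0"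
    by (rule moore_combination_eq_0)
  then have "v = 0\<^sub>v n"
    using v(1) by (intro eq_vecI) auto
  then show False
    using v(2) by simp
qed

lemma poly_annih_eq_0: "u \<in> Fq_span q n g \<Longrightarrow> poly (annih q n g) u = 0"
  unfolding annih_def poly_prod by (intro prod_zero) auto

lemma degree_annih: "degree (annih q n g) = q ^ n"
proof -
  have "degree (annih q n g) = (\<Sum>u\<in>Fq_span q n g. degree [:- u, 1:])"
    unfolding annih_def by (rule degree_prod_eq_sum_degree) auto
  then show ?thesis
    by (simp add: card_Fq_span)
qed

lemma lead_coeff_annih: "lead_coeff (annih q n g) = 1"
  unfolding annih_def by (simp add: lead_coeff_prod)

text \<open>The annihilator equals the monic linearized polynomial \<open>x ^ (q ^ n) + \<Sum>j<n. c j * x ^ (q ^ j)\<close>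
  vanishing at the \<open>g l\<close>, whose coefficients come from the Moore system; both are monic of degree
  \<open>q ^ n\<close> and agree on the \<open>q ^ n\<close> points of the span.\<close>

lemma annih_in_Lq: "annih q n g \<in> Lq q"
proof -
  obtain c where c: "\<forall>l<n. (\<Sum>j<n. c j * g l ^ (q ^ j)) = - (g l ^ (q ^ n))"
    using moore_combination_solvable[of "\<lambda>l. - (g l ^ (q ^ n))"] by blast
  define L where "L = monom 1 (q ^ n) + linearized q c n"
  have "L \<in> Lq q"
    unfolding L_def by (intro Lq_add Lq_monom Lq_linearized)
  have L_vanish: "\<forall>i<n. poly L (g i) = 0"
    using c by (simp add: L_def poly_linearized poly_monom)
  have "degree (linearized q c n) \<le> q ^ n"
    using degree_linearized_le[OF q_ge_1, of c n] power_increasing[OF diff_le_self q_ge_1]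
    by (rule order_trans)
  then have "degree L \<le> q ^ n"
    unfolding L_def by (intro degree_add_le) (auto simp: degree_monom_le)
  have "L = annih q n g"
  proof (rule poly_eqI_degree_lead_coeff[of L "q ^ n" _ "Fq_span q n g"])
    show "coeff L (q ^ n) = coeff (annih q n g) (q ^ n)"
      using coeff_linearized[OF q_ge_2, of c n n] lead_coeff_annih by (simp add: L_def degree_annih)
    show "poly L u = poly (annih q n g) u" if "u \<in> Fq_span q n g" for u
      using poly_Fq_span_Lq_eq_0[OF \<open>L \<in> Lq q\<close> L_vanish that] poly_annih_eq_0[OF that] by simp
  qed (simp_all add: card_Fq_span degree_annih \<open>degree L \<le> q ^ n\<close>)
  then show ?thesis
    using \<open>L \<in> Lq q\<close> by simp
qed

lemma poly_pcompose_annih_eq_0: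
  assumes "\<beta> \<in> Lq q" "i < n"
  shows "poly (pcompose \<beta> (annih q n g)) (g i) = 0"
  using assms by (simp add: poly_pcompose poly_annih_eq_0 g_in_Fq_span poly_0_Lq[OF q_ge_1])

lemma degree_vanishing_Lq:
  assumes "F \<in> Lq q" "\<forall>i<n. poly F (g i) = 0" "F \<noteq> 0"
  obtains t where "n \<le> t" "degree F = q ^ t"
proof -
  obtain t where t: "degree F = q ^ t"
    using degree_Lq_eq_power[OF assms(1,3)] by blast
  have "n \<le> t"
  proof (rule ccontr)
    assume "\<not> n \<le> t"
    then have "degree F < q ^ n"
      using t q_ge_2 by (simp add: power_strict_increasing)
    then have "F = 0"
      by (rule Lq_eq_0_if_degree_less[OF assms(1,2)])
    then show False
      using assms(3) by contradiction
  qed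
  then show ?thesis
    using t that by blast
qed

text \<open>Division by the annihilator in the composition sense: subtracting
  \<open>lead_coeff F \<cdot> annih ^ (q ^ (t - n))\<close> lowers the degree \<open>q ^ t\<close> of \<open>F\<close>.\<close>

lemma vanishing_Lq_eq_pcompose_annih:
  assumes "F \<in> Lq q" and "\<forall>i<n. poly F (g i) = 0"
  shows "\<exists>\<beta>\<in>Lq q. F = pcompose \<beta> (annih q n g)"
  using assms
proof (induction "degree F" arbitrary: F rule: less_induct)
  case less
  show ?case
  proof (cases "F = 0")
    case True
    then show ?thesis
      by (intro bexI[of _ 0]) simp_all
  next
    case False
    then obtain t where "n \<le> t" and t: "degree F = q ^ t"
      using degree_vanishing_Lq less.prems by blast
    define \<beta>\<^sub>0 where "\<beta>\<^sub>0 = monom (lead_coeff F) (q ^ (t - n))"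
    let ?G = "pcompose \<beta>\<^sub>0 (annih q n g)"
    have "annih q n g \<noteq> 0"
      using lead_coeff_annih by auto
    then have deg: "degree (annih q n g ^ q ^ (t - n)) = degree F"
      using \<open>n \<le> t\<close> t by (simp add: degree_power_eq degree_annih flip: power_mult power_add)
    moreover have "lead_coeff (annih q n g ^ q ^ (t - n)) = 1"
      by (simp add: lead_coeff_power lead_coeff_annih)
    ultimately have lc: "coeff (annih q n g ^ q ^ (t - n)) (degree F) = 1"
      by simp
    have "degree (F - ?G) < degree F"
    proof (rule degree_lessI)
      show "\<forall>k\<ge>degree F. coeff (F - ?G) k = 0"
        using deg lc coeff_eq_0[of F] coeff_eq_0[of "annih q n g ^ q ^ (t - n)"]
        by (auto simp: \<beta>\<^sub>0_def pcompose_monom le_less)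
    qed (use t q_ge_1 in simp)
    moreover have "\<beta>\<^sub>0 \<in> Lq q"
      by (simp add: \<beta>\<^sub>0_def Lq_monom)
    then have "F - ?G \<in> Lq q" and "\<forall>i<n. poly (F - ?G) (g i) = 0"
      using less.prems poly_pcompose_annih_eq_0 by (auto intro: Lq_diff Lq_pcompose annih_in_Lq)
    ultimately obtain \<beta> where "\<beta> \<in> Lq q" "F - ?G = pcompose \<beta> (annih q n g)"
      using less.hyps by blast
    then have "F = pcompose (\<beta> + \<beta>\<^sub>0) (annih q n g)" and "\<beta> + \<beta>\<^sub>0 \<in> Lq q"
      using \<open>\<beta>\<^sub>0 \<in> Lq q\<close> by (auto simp: pcompose_add algebra_simps intro: Lq_add)
    then show ?thesis
      by blast
  qed
qed

text \<open>At \<open>x = g i\<close> the matrix \<open>D_k\<close> has two equal columns unless \<open>k = i\<close>; for \<open>k = i\<close> it is the Moore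
  matrix with column \<open>i\<close> moved to the end.\<close>

lemma poly_det_Dmat:
  assumes i: "i < n" and k: "k < n"
  shows "poly (det (Dmat q n g k)) (g i) = (if k = i then (-1) ^ (n - 1 - i) * det (moore q n g) else 0)"
proof -
  let ?E = "map_mat (\<lambda>p. poly p (g i)) (Dmat q n g k)"
  have E: "?E \<in> carrier_mat n n"
    using Dmat_carrier by simp
  have E_entry: "poly (Dmat q n g k $$ (j, l)) (g i)
      = g (if l < n - 1 then (if l < k then l else l + 1) else i) ^ (q ^ j)"
    if "j < n" "l < n" for j l
    using that k by (simp add: Dmat_entry poly_monom)
  show ?thesis
  proof (cases "k = i")
    case True
    have "?E = mat n n (\<lambda>(j, l). moore q n g $$ (j, moved_col i (n - 1) l))"
      using i by (intro eq_matI) (auto simp: E_entry[unfolded True] moore_def moved_col_def True)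
    then show ?thesis
      using True i det_move_col[of "moore q n g" n i "n - 1"] by (simp add: poly_det moore_def)
  next
    case False
    define l where "l = (if i < k then i else i - 1)"
    have l: "l < n - 1" "(if l < k then l else l + 1) = i"
      using False i k by (auto simp: l_def)
    have "col ?E l = col ?E (n - 1)"
      using l i E by (intro eq_vecI) (auto simp: E_entry)
    then have "det ?E = 0"
      using l by (intro det_identical_columns[OF E, of l "n - 1"]) auto
    then show ?thesis
      using False by (simp add: poly_det)
  qed
qed

lemma Lam_in_Lq: "Lam q n g r \<in> Lq q"
  unfolding Lam_def by (intro Lq_smult Lq_sum det_Dmat_in_Lq) simp

lemma poly_Lam: 
  assumes "i < n"
  shows "poly (Lam q n g r) (g i) = r i"
proof -
  have "poly (Lam q n g r) (g i)
      = inverse (det (moore q n g)) * ((-1) ^ (n - 1 - i) * r i * ((-1) ^ (n - 1 - i) * det (moore q n g)))"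
    using assms by (simp add: Lam_def poly_sum poly_det_Dmat if_distrib cong: if_cong)
  also have "\<dots> = r i * ((-1) ^ (n - 1 - i)) ^ 2 * (inverse (det (moore q n g)) * det (moore q n g))"
    by (simp add: algebra_simps power2_eq_square)
  also have "\<dots> = r i"
    using det_moore_nonzero by (simp flip: power_mult)
  finally show ?thesis .
qed

lemma interp_module_member_vanishes:
  assumes "(f, h) \<in> interp_module q n g r"
  shows "f \<in> Lq q \<and> h \<in> Lq q \<and> (\<forall>i<n. poly f (g i) + poly h (r i) = 0)"
proof -
  obtain \<beta> \<gamma> where "\<beta> \<in> Lq q" "\<gamma> \<in> Lq q"
    and f: "f = pcompose \<beta> (annih q n g) + pcompose \<gamma> (- Lam q n g r)"
    and h: "h = pcompose \<beta> 0 + pcompose \<gamma> [:0, 1:]"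
    using assms unfolding interp_module_def by blast
  have "h = \<gamma>"
    using h by (simp add: pcompose_0' coeff_0_Lq[OF q_ge_1 \<open>\<beta> \<in> Lq q\<close>])
  moreover have "f \<in> Lq q"
    unfolding f by (intro Lq_add Lq_pcompose Lq_uminus annih_in_Lq Lam_in_Lq \<open>\<beta> \<in> Lq q\<close> \<open>\<gamma> \<in> Lq q\<close>)
  moreover have "poly f (g i) = - poly \<gamma> (r i)" if "i < n" for i
    using that poly_pcompose_annih_eq_0[OF \<open>\<beta> \<in> Lq q\<close>]
    by (simp add: f poly_pcompose poly_Lam poly_uminus_Lq[OF \<open>\<gamma> \<in> Lq q\<close>])
  ultimately show ?thesis
    using \<open>\<gamma> \<in> Lq q\<close> by simp
qed

text \<open>\<open>f + h \<circ> \<Lambda>\<close> vanishes at the \<open>g i\<close>, hence is a composition with the annihilator.\<close>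

lemma vanishing_pair_in_interp_module:
  assumes "f \<in> Lq q" "h \<in> Lq q" "\<forall>i<n. poly f (g i) + poly h (r i) = 0"
  shows "(f, h) \<in> interp_module q n g r"
proof -
  have "f + pcompose h (Lam q n g r) \<in> Lq q"
    by (intro Lq_add Lq_pcompose assms(1,2) Lam_in_Lq)
  moreover have "\<forall>i<n. poly (f + pcompose h (Lam q n g r)) (g i) = 0"
    using assms(3) by (simp add: poly_pcompose poly_Lam)
  ultimately obtain \<beta> where "\<beta> \<in> Lq q" and \<beta>: "f + pcompose h (Lam q n g r) = pcompose \<beta> (annih q n g)"
    using vanishing_Lq_eq_pcompose_annih by blast
  then have "f = pcompose \<beta> (annih q n g) + pcompose h (- Lam q n g r)"
    by (simp add: pcompose_uminus_Lq[OF assms(2)] flip: \<beta>)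
  moreover have "h = pcompose \<beta> 0 + pcompose h [:0, 1:]"
    by (simp add: pcompose_0' coeff_0_Lq[OF q_ge_1 \<open>\<beta> \<in> Lq q\<close>])
  ultimately show ?thesis
    unfolding interp_module_def using \<open>\<beta> \<in> Lq q\<close> assms(2) by blast
qed

end

lemma CHAR_eq_if_card_eq_prime_power:
  assumes "prime p" and "card (UNIV :: 'a::{finite, field} set) = p ^ k"
  shows "CHAR('a) = p"
proof -
  have "prime CHAR('a)"
    by (intro prime_CHAR_semidom finite_imp_CHAR_pos) simp
  moreover have "CHAR('a) dvd p ^ k"
    using CHAR_dvd_CARD[where 'a = 'a] assms(2) by simp
  ultimately have "CHAR('a) dvd p"
    using prime_dvd_power by blast
  then show ?thesis
    using \<open>prime CHAR('a)\<close> assms(1) primes_dvd_imp_eq by blast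
qed

theorem theorem21:
  fixes q m n :: nat and g r :: "nat \<Rightarrow> 'a::{finite, field}"
  assumes "\<exists>p k. prime p \<and> k \<ge> 1 \<and> q = p ^ k"
    and "m \<ge> 1"
    and "card (UNIV :: 'a set) = q ^ m"
    and "Fq_lin_indep q n g"
  shows "interp_module q n g r =
    {(f, h). f \<in> Lq q \<and> h \<in> Lq q \<and> (\<forall>i<n. poly f (g i) + poly h (r i) = 0)}"
proof -
  obtain p k where p: "prime p" and "k \<ge> 1" and q: "q = p ^ k"
    using assms(1) by blast
  have "CHAR('a) = p"
    using CHAR_eq_if_card_eq_prime_power[OF p] assms(3) by (simp add: q power_mult[symmetric])
  moreover have "q \<ge> 2"
    using prime_ge_2_nat[OF p] self_le_power[of p k] \<open>k \<ge> 1\<close> by (simp add: q)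
  ultimately interpret Fq_independent q k "TYPE('a)" m n g
    using p q assms(2-4) by unfold_locales auto
  show ?thesis
  proof (intro Set.set_eqI iffI)
    fix x assume "x \<in> interp_module q n g r"
    then show "x \<in> {(f, h). f \<in> Lq q \<and> h \<in> Lq q \<and> (\<forall>i<n. poly f (g i) + poly h (r i) = 0)}"
      using interp_module_member_vanishes by (cases x) simp
  next
    fix x assume "x \<in> {(f, h). f \<in> Lq q \<and> h \<in> Lq q \<and> (\<forall>i<n. poly f (g i) + poly h (r i) = 0)}"
    then show "x \<in> interp_module q n g r"
      using vanishing_pair_in_interp_module by (cases x) simp
  qed
qed

end
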